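(* Let $0<\epsilon\le 1/2$, let $r=\lceil 2^{22}/\epsilon^2\rceil$ and $\gamma=2r+1$, and let $\delta\ge 0$. Consider a population of agents holding opinions in $\{0,1\}$, in which the fraction of agents holding the correct opinion $\mathcal{B}$ is at least $1/2+\delta$. Take $\gamma$ independent noisy samples, each obtained by choosing an agent uniformly at random from the population and reading its opinion through a channel that flips the bit independently with probability at most $1/2-\epsilon$. Then the probability that the majority of the $\gamma$ samples equals $\mathcal{B}$ is at least $\min\{1/2+4\delta,\ 1/2+1/100\}$.
   Context: The "bias towards the correct opinion" of a population being at least $\delta$ means that the fraction of its members holding the correct opinion $\mathcal{B}$ is at least $1/2+\delta$. *)

theory Defs
  imports "HOL-Probability.Product_PMF"
begin

definition noisy_sample :: "'a set \<Rightarrow> ('a \<Rightarrow> bool) \<Rightarrow> real \<Rightarrow> bool pmf" where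
  "noisy_sample A opn eta =
     do { a \<leftarrow> pmf_of_set A; flip \<leftarrow> bernoulli_pmf eta; return_pmf (opn a \<noteq> flip) }"

definition noisy_samples :: "nat \<Rightarrow> 'a set \<Rightarrow> ('a \<Rightarrow> bool) \<Rightarrow> (nat \<Rightarrow> real) \<Rightarrow> (nat \<Rightarrow> bool) pmf" where
  "noisy_samples gamma A opn eta = Pi_pmf {..<gamma} False (\<lambda>i. noisy_sample A opn (eta i))"

definition majority_is :: "nat \<Rightarrow> bool \<Rightarrow> (nat \<Rightarrow> bool) \<Rightarrow> bool" where
  "majority_is gamma b f \<longleftrightarrow> 2 * card {i \<in> {..<gamma}. f i = b} > gamma"

end

theory Submission
  imports Defs
begin

text \<open>The number of samples that disagree with B is a sum of independent Bernoulli
  variables whose parameters are at most 1/2 - 2\<epsilon>\<delta>. It is therefore stochastically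
  dominated by a binomial variable with parameter 1/2 - \<beta>, where \<beta> = min(2\<epsilon>\<delta>, 1/(4\<surd>r)),
  so the majority is correct with probability at least the binomial cdf at r. At \<beta> = 0 this
  cdf is 1/2 by symmetry, and its derivative is (2r+1) C(2r,r) (p(1-p))^r in absolute value;
  since C(2r,r) \<ge> 4^r/(2\<surd>r), the mean value theorem gives a gain of at least (3/4)\<beta>\<surd>r,
  which for \<surd>r \<ge> 2^11/\<epsilon> is at least min(4\<delta>, 1/100).\<close>

lemma measure_pmf_prob_bind:
  "measure_pmf.prob (bind_pmf M F) S = (\<integral>x. measure_pmf.prob (F x) S \<partial>M)"
  unfolding measure_pmf_bind
  by (rule measure_pmf.measure_bind[where N="count_space UNIV"])
     (auto intro!: measurable_pmf_measure2
       simp: space_subprob_algebra prob_space_imp_subprob_space measure_pmf.prob_space_axioms)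

lemma bool_pmf_eq_bernoulli_pmf: "(p :: bool pmf) = bernoulli_pmf (pmf p True)"
proof (rule pmf_eqI)
  fix b show "pmf p b = pmf (bernoulli_pmf (pmf p True)) b"
    by (cases b) (auto simp: pmf_False_conv_True pmf_le_1)
qed

lemma map_pmf_eq_bernoulli_pmf:
  assumes "0 \<le> eta" "eta \<le> 1"
  shows "map_pmf (\<lambda>flip. flip = c) (bernoulli_pmf eta) = bernoulli_pmf (if c then eta else 1 - eta)"
  using assms by (subst bool_pmf_eq_bernoulli_pmf) (auto simp: pmf_map vimage_def measure_pmf_single)

lemma card_filter_add_card_filter_not:
  assumes "finite I"
  shows "card {i \<in> I. P i} + card {i \<in> I. \<not> P i} = card I"
proof -
  have "{i \<in> I. P i} \<union> {i \<in> I. \<not> P i} = I" by blast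
  then show ?thesis
    using assms by (metis (no_types, lifting) card_Un_disjoint disjoint_iff finite_Un mem_Collect_eq)
qed

definition add_bernoulli_pmf :: "real \<Rightarrow> nat pmf \<Rightarrow> nat pmf" where
  "add_bernoulli_pmf p M = bernoulli_pmf p \<bind> (\<lambda>b. map_pmf (\<lambda>k. of_bool b + k) M)"

lemma prob_add_bernoulli_pmf_atMost:
  assumes "0 \<le> p" "p \<le> 1"
  shows "measure_pmf.prob (add_bernoulli_pmf p M) {..k} =
    p * (if k = 0 then 0 else measure_pmf.prob M {..k - 1}) + (1 - p) * measure_pmf.prob M {..k}"
proof -
  have "(+) (Suc 0) -` {..k} = (if k = 0 then {} else {..k - 1})" "(+) 0 -` {..k} = {..k}"
    by auto
  then show ?thesis
    using assms by (simp add: add_bernoulli_pmf_def measure_pmf_prob_bind mult.commute)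
qed

lemma prob_add_bernoulli_pmf_atMost_mono:
  assumes "0 \<le> p" "p \<le> q" "q \<le> 1"
    and "\<And>k. measure_pmf.prob M' {..k} \<le> measure_pmf.prob M {..k}"
  shows "measure_pmf.prob (add_bernoulli_pmf q M') {..k} \<le> measure_pmf.prob (add_bernoulli_pmf p M) {..k}"
proof -
  define a where "a = (if k = 0 then 0 else measure_pmf.prob M {..k - 1})"
  define a' where "a' = (if k = 0 then 0 else measure_pmf.prob M' {..k - 1})"
  define c where "c = measure_pmf.prob M {..k}"
  define c' where "c' = measure_pmf.prob M' {..k}"
  have "a \<le> c"
    unfolding a_def c_def by (auto intro!: measure_pmf.finite_measure_mono)
  have "q * a' + (1 - q) * c' \<le> q * a + (1 - q) * c"
    unfolding a_def a'_def c_def c'_def using assms by (intro add_mono mult_left_mono) auto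
  also have "\<dots> \<le> p * a + (1 - p) * c"
    using \<open>a \<le> c\<close> assms mult_right_mono[of p q "c - a"] by (simp add: algebra_simps)
  finally show ?thesis
    using assms by (simp add: prob_add_bernoulli_pmf_atMost a_def a'_def c_def c'_def)
qed

lemma binomial_pmf_Suc_eq_add_bernoulli_pmf:
  assumes "0 \<le> p" "p \<le> 1"
  shows "binomial_pmf (Suc n) p = add_bernoulli_pmf p (binomial_pmf n p)"
  using assms by (simp add: binomial_pmf_Suc add_bernoulli_pmf_def map_pmf_def of_bool_def)

definition mismatch_count_pmf :: "'i set \<Rightarrow> bool \<Rightarrow> ('i \<Rightarrow> bool pmf) \<Rightarrow> nat pmf" where
  "mismatch_count_pmf I b D = map_pmf (\<lambda>f. card {i \<in> I. f i \<noteq> b}) (Pi_pmf I False D)"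

lemma mismatch_count_pmf_insert:
  assumes "finite I" "x \<notin> I" "map_pmf (\<lambda>v. v \<noteq> b) (D x) = bernoulli_pmf p"
  shows "mismatch_count_pmf (insert x I) b D = add_bernoulli_pmf p (mismatch_count_pmf I b D)"
proof -
  define mismatches where "mismatches J f = card {i \<in> J. f i \<noteq> b}" for J and f :: "'a \<Rightarrow> bool"
  have mismatches_upd: "mismatches (insert x I) (f(x := v)) = of_bool (v \<noteq> b) + mismatches I f" for f v
  proof -
    have "{i \<in> insert x I. (f(x := v)) i \<noteq> b} =
        (if v \<noteq> b then insert x {i \<in> I. f i \<noteq> b} else {i \<in> I. f i \<noteq> b})"
      using assms(2) by auto
    then show ?thesis using assms(1,2) by (simp add: mismatches_def)
  qed
  have "mismatch_count_pmf (insert x I) b D =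
      map_pmf (mismatches (insert x I)) (Pi_pmf (insert x I) False D)"
    unfolding mismatch_count_pmf_def mismatches_def ..
  also have "\<dots> = D x \<bind> (\<lambda>v. map_pmf (\<lambda>k. of_bool (v \<noteq> b) + k) (map_pmf (mismatches I) (Pi_pmf I False D)))"
    unfolding Pi_pmf_insert'[OF assms(1,2)]
    by (simp add: map_bind_pmf mismatches_upd map_pmf_def bind_assoc_pmf bind_return_pmf)
  also have "\<dots> = add_bernoulli_pmf p (mismatch_count_pmf I b D)"
    unfolding add_bernoulli_pmf_def assms(3)[symmetric] bind_map_pmf
    by (simp add: mismatch_count_pmf_def mismatches_def[abs_def])
  finally show ?thesis .
qed

lemma prob_binomial_le_prob_mismatch_count:
  assumes "finite I"
    and "\<And>i. i \<in> I \<Longrightarrow> map_pmf (\<lambda>v. v \<noteq> b) (D i) = bernoulli_pmf (p i) \<and> 0 \<le> p i \<and> p i \<le> q"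
    and "0 \<le> q" "q \<le> 1"
  shows "measure_pmf.prob (binomial_pmf (card I) q) {..k} \<le> measure_pmf.prob (mismatch_count_pmf I b D) {..k}"
  using assms
proof (induction I arbitrary: k rule: finite_induct)
  case empty
  then show ?case by (simp add: binomial_pmf_0 mismatch_count_pmf_def)
next
  case (insert x I)
  then show ?case
    by (simp add: binomial_pmf_Suc_eq_add_bernoulli_pmf mismatch_count_pmf_insert
        prob_add_bernoulli_pmf_atMost_mono)
qed

lemma noisy_sample_mismatch:
  assumes "finite A" "A \<noteq> {}" "0 \<le> eta" "eta \<le> 1"
    and "x = real (card {a \<in> A. opn a = B}) / real (card A)"
  shows "map_pmf (\<lambda>v. v \<noteq> B) (noisy_sample A opn eta) = bernoulli_pmf (x * eta + (1 - x) * (1 - eta))"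
proof -
  have flips: "map_pmf (\<lambda>v. v \<noteq> B) (noisy_sample A opn eta) =
      pmf_of_set A \<bind> (\<lambda>a. map_pmf (\<lambda>flip. flip = (opn a = B)) (bernoulli_pmf eta))"
    unfolding noisy_sample_def map_bind_pmf map_pmf_def[of _ "bernoulli_pmf _"] map_return_pmf
    by (intro bind_pmf_cong refl) auto
  define n where "n = real (card A)"
  define nB where "nB = real (card {a \<in> A. opn a = B})"
  define nN where "nN = real (card {a \<in> A. opn a \<noteq> B})"
  have n_split: "n = nB + nN"
    unfolding n_def nB_def nN_def
    using card_filter_add_card_filter_not[OF assms(1), of "\<lambda>a. opn a = B"] by linarith
  have n_pos: "n > 0"
    unfolding n_def using assms(1,2) by (simp add: card_gt_0_iff)
  have x: "nB / n = x"
    unfolding assms(5) nB_def n_def ..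
  have one_minus_x: "nN / n = 1 - x"
    unfolding x[symmetric] using n_split n_pos by (simp add: field_simps)
  have "pmf (map_pmf (\<lambda>v. v \<noteq> B) (noisy_sample A opn eta)) True
      = (\<Sum>a\<in>A. if opn a = B then eta else 1 - eta) / n"
    unfolding flips n_def using assms(1-4)
    by (simp add: pmf_bind_pmf_of_set map_pmf_eq_bernoulli_pmf if_distrib[of "\<lambda>p. pmf p True"])
  also have "\<dots> = (nB * eta + nN * (1 - eta)) / n"
    unfolding nB_def nN_def using assms(1) by (simp add: sum.If_cases Int_def)
  also have "\<dots> = nB / n * eta + nN / n * (1 - eta)"
    by (simp add: add_divide_distrib)
  also have "\<dots> = x * eta + (1 - x) * (1 - eta)"
    unfolding x one_minus_x ..
  finally show ?thesis by (metis bool_pmf_eq_bernoulli_pmf)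
qed

definition binomial_cdf :: "nat \<Rightarrow> nat \<Rightarrow> real \<Rightarrow> real" where
  "binomial_cdf n k p = (\<Sum>i\<le>k. real (n choose i) * p ^ i * (1 - p) ^ (n - i))"

lemma prob_binomial_pmf_atMost:
  assumes "0 \<le> p" "p \<le> 1"
  shows "measure_pmf.prob (binomial_pmf n p) {..k} = binomial_cdf n k p"
  using assms by (simp add: measure_measure_pmf_finite binomial_cdf_def)

lemma binomial_cdf_has_real_derivative:
  assumes "k \<le> n"
  shows "(binomial_cdf (Suc n) k has_real_derivative
           - (real (Suc n) * real (n choose k) * p ^ k * (1 - p) ^ (n - k))) (at p)"
  using assms
proof (induction k)
  case 0
  have "binomial_cdf (Suc n) 0 = (\<lambda>p. (1 - p) ^ Suc n)"
    by (simp add: binomial_cdf_def[abs_def] del: power_Suc)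
  then show ?case
    by (auto intro!: derivative_eq_intros simp del: power_Suc)
next
  case (Suc k)
  obtain m where m: "n - k = Suc m"
    using Suc.prems by (metis Suc_diff_le Suc_le_D diff_Suc_Suc)
  then have m': "Suc n - Suc k = Suc m" "n - Suc k = m"
    using Suc.prems by auto
  define C where "C = real (Suc n choose Suc k)"
  have "((\<lambda>p. C * p ^ Suc k * (1 - p) ^ Suc m) has_real_derivative
      real (Suc k) * C * p ^ k * (1 - p) ^ Suc m - real (Suc m) * C * p ^ Suc k * (1 - p) ^ m) (at p)"
    by (auto intro!: derivative_eq_intros simp del: power_Suc simp: algebra_simps)
  moreover have "real (Suc k) * C = real (Suc n) * real (n choose k)"
    unfolding C_def by (metis Suc_times_binomial_eq of_nat_mult mult.commute)
  moreover have "real (Suc m) * C = real (Suc n) * real (n choose Suc k)"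
    using binomial_absorb_comp[of "Suc n" "Suc k"] m' unfolding C_def
    by (metis diff_Suc_1 of_nat_mult)
  ultimately have new_term: "((\<lambda>p. C * p ^ Suc k * (1 - p) ^ Suc m) has_real_derivative
      real (Suc n) * real (n choose k) * p ^ k * (1 - p) ^ Suc m
      - real (Suc n) * real (n choose Suc k) * p ^ Suc k * (1 - p) ^ m) (at p)"
    by simp
  have "binomial_cdf (Suc n) (Suc k) = (\<lambda>p. binomial_cdf (Suc n) k p + C * p ^ Suc k * (1 - p) ^ Suc m)"
    by (simp add: binomial_cdf_def[abs_def] C_def m m' del: binomial_Suc_Suc)
  then show ?case
    using DERIV_add[OF Suc.IH new_term] Suc.prems m m' by simp
qed
lemma binomial_cdf_half: "binomial_cdf (2 * r + 1) r (1 / 2) = 1 / 2"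
proof -
  have "binomial_cdf (2 * r + 1) r (1 / 2) = (\<Sum>i\<le>r. real (2 * r + 1 choose i) * (1 / 2) ^ (2 * r + 1))"
    unfolding binomial_cdf_def
  proof (intro sum.cong refl)
    fix i assume "i \<in> {..r}"
    then have "(1 / 2 :: real) ^ i * (1 / 2) ^ (2 * r + 1 - i) = (1 / 2) ^ (2 * r + 1)"
      by (simp flip: power_add)
    then show "real (2 * r + 1 choose i) * (1 / 2) ^ i * (1 - 1 / 2) ^ (2 * r + 1 - i) =
        real (2 * r + 1 choose i) * (1 / 2) ^ (2 * r + 1)"
      by (simp add: mult.assoc)
  qed
  also have "\<dots> = real (\<Sum>i\<le>r. 2 * r + 1 choose i) * (1 / 2) ^ (2 * r + 1)"
    by (simp add: sum_distrib_right)
  also have "\<dots> = 1 / 2"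
    unfolding binomial_r_part_sum by (simp add: power_mult field_simps)
  finally show ?thesis .
qed

lemma central_binomial_Suc:
  "real (Suc r) * real ((2 * Suc r) choose Suc r) = 2 * real (2 * r + 1) * real ((2 * r) choose r)"
proof -
  have "(2 * r + 1) choose Suc r = (2 * r + 1) choose r"
    using central_binomial_odd[of "2 * r + 1"] by simp
  then have "(2 * Suc r) choose Suc r = 2 * ((2 * r + 1) choose r)"
    by simp
  moreover have "Suc r * ((2 * r + 1) choose r) = (2 * r + 1) * ((2 * r) choose r)"
    using binomial_absorb_comp[of "2 * r + 1" r] by simp
  ultimately have "Suc r * ((2 * Suc r) choose Suc r) = 2 * (2 * r + 1) * ((2 * r) choose r)"
    by (metis mult.assoc mult.left_commute)
  then show ?thesis
    by (metis of_nat_mult of_nat_numeral)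
qed

lemma four_pow_le_central_binomial_sq:
  assumes "r \<ge> 1"
  shows "16 ^ r \<le> 4 * real r * real ((2 * r) choose r) ^ 2"
  using assms
proof (induction r rule: nat_induct_at_least)
  case base
  then show ?case by (simp add: numeral_2_eq_2)
next
  case (Suc r)
  define c where "c = real ((2 * r) choose r)"
  define c' where "c' = real ((2 * Suc r) choose Suc r)"
  have key: "real (Suc r) * c' = 2 * real (2 * r + 1) * c"
    using central_binomial_Suc[of r] unfolding c_def c'_def .
  have "real (Suc r) * (16 * (4 * real r * c ^ 2)) = 16 * (real (Suc r) * (4 * real r)) * c ^ 2"
    by (simp add: algebra_simps)
  also have "\<dots> \<le> 16 * real (2 * r + 1) ^ 2 * c ^ 2"
    by (intro mult_right_mono mult_left_mono) (auto simp: power2_eq_square algebra_simps)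
  also have "\<dots> = 4 * (real (Suc r) * c') ^ 2"
    unfolding key by (simp add: power2_eq_square algebra_simps)
  also have "\<dots> = real (Suc r) * (4 * real (Suc r) * c' ^ 2)"
    by (simp add: power2_eq_square)
  finally have "16 * (4 * real r * c ^ 2) \<le> 4 * real (Suc r) * c' ^ 2"
    by (rule mult_left_le_imp_le) simp
  then show ?case
    using Suc.IH unfolding c_def c'_def by simp
qed

lemma central_binomial_div_four_pow_ge:
  assumes "r \<ge> 1"
  shows "1 / (2 * sqrt r) \<le> real ((2 * r) choose r) / 4 ^ r"
proof -
  have "((4 :: real) ^ r) ^ 2 = 16 ^ r"
    using power_mult[of "4 :: real" 2 r] power_mult[of "4 :: real" r 2] by (simp add: mult.commute)
  also have "\<dots> \<le> (2 * sqrt r * real ((2 * r) choose r)) ^ 2"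
    using four_pow_le_central_binomial_sq[OF assms] by (simp add: power_mult_distrib)
  finally have "4 ^ r \<le> 2 * sqrt r * real ((2 * r) choose r)"
    by (rule power2_le_imp_le) simp
  then show ?thesis
    using assms by (simp add: divide_simps mult.commute)
qed

lemma quarter_pow_le_pow_mul_one_minus:
  fixes z b :: real
  assumes "\<bar>z - 1 / 2\<bar> \<le> b" "b \<le> 1 / 2"
  shows "(1 / 4) ^ n * (1 - 4 * real n * b ^ 2) \<le> (z * (1 - z)) ^ n"
proof -
  have "(z - 1 / 2) ^ 2 \<le> b ^ 2"
    using power_mono[OF assms(1) abs_ge_zero, of 2] by simp
  then have lower: "1 / 4 * (1 - 4 * b ^ 2) \<le> z * (1 - z)"
    by (simp add: power2_eq_square algebra_simps)
  have "0 \<le> b"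
    using assms(1) abs_ge_zero order_trans by blast
  then have "b ^ 2 \<le> 1 / 4"
    using power_mono[OF assms(2), of 2] by (simp add: power2_eq_square)
  have "(1 / 4) ^ n * (1 - 4 * real n * b ^ 2) \<le> (1 / 4) ^ n * (1 - 4 * b ^ 2) ^ n"
    using Bernoulli_inequality[of "- 4 * b ^ 2" n] \<open>b ^ 2 \<le> 1 / 4\<close>
    by (intro mult_left_mono) auto
  also have "\<dots> = (1 / 4 * (1 - 4 * b ^ 2)) ^ n"
    by (rule power_mult_distrib[symmetric])
  also have "\<dots> \<le> (z * (1 - z)) ^ n"
    using lower \<open>b ^ 2 \<le> 1 / 4\<close> by (intro power_mono) auto
  finally show ?thesis .
qed

lemma binomial_cdf_below_half_ge:
  assumes "r \<ge> 1" "0 \<le> b" "b \<le> 1 / (4 * sqrt r)"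
  shows "1 / 2 + 3 / 4 * b * sqrt r \<le> binomial_cdf (2 * r + 1) r (1 / 2 - b)"
proof (cases "b = 0")
  case True
  then show ?thesis using binomial_cdf_half[of r] by simp
next
  case False
  define s where "s = sqrt r"
  define C where "C = real ((2 * r) choose r)"
  have s: "s \<ge> 1" "s * s = real r"
    unfolding s_def using assms(1) by auto
  have b4s: "b * (4 * s) \<le> 1"
    using assms(3) s by (simp add: s_def field_simps)
  then have "(b * (4 * s)) ^ 2 \<le> 1"
    using assms(2) s by (simp add: power_le_one)
  then have rb: "4 * real r * b ^ 2 \<le> 1 / 4"
    by (simp add: power2_eq_square algebra_simps flip: s(2))
  have "b * 4 \<le> b * (4 * s)"
    using assms(2) s by (intro mult_left_mono) auto
  then have b_half: "b \<le> 1 / 2"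
    using b4s by linarith
  obtain z where z: "1 / 2 - b < z" "z < 1 / 2"
    and mvt: "binomial_cdf (2 * r + 1) r (1 / 2) - binomial_cdf (2 * r + 1) r (1 / 2 - b) =
      (1 / 2 - (1 / 2 - b)) * - (real (2 * r + 1) * C * z ^ r * (1 - z) ^ (2 * r - r))"
    using MVT2[of "1 / 2 - b" "1 / 2", OF _ binomial_cdf_has_real_derivative[of r "2 * r"]]
      assms(2) False unfolding C_def by auto
  have "(1 / 4) ^ r * (3 / 4) \<le> (1 / 4) ^ r * (1 - 4 * real r * b ^ 2)"
    using rb by (intro mult_left_mono) auto
  also have "\<dots> \<le> (z * (1 - z)) ^ r"
    using z b_half by (intro quarter_pow_le_pow_mul_one_minus) auto
  finally have "(1 / 4) ^ r * (3 / 4) \<le> (z * (1 - z)) ^ r" .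
  moreover have "s \<le> real (2 * r + 1) * (C / 4 ^ r)"
  proof -
    have "s \<le> real (2 * r + 1) * (1 / (2 * s))"
      using s by (simp add: field_simps)
    also have "\<dots> \<le> real (2 * r + 1) * (C / 4 ^ r)"
      using central_binomial_div_four_pow_ge[OF assms(1)] unfolding C_def s_def
      by (intro mult_left_mono) auto
    finally show ?thesis .
  qed
  ultimately have "s * (3 / 4) \<le> real (2 * r + 1) * C * (z * (1 - z)) ^ r"
  proof -
    assume zpow: "(1 / 4) ^ r * (3 / 4) \<le> (z * (1 - z)) ^ r"
      and s_le: "s \<le> real (2 * r + 1) * (C / 4 ^ r)"
    have "s * (3 / 4) \<le> real (2 * r + 1) * (C / 4 ^ r) * (3 / 4)"
      using s_le by (rule mult_right_mono) simp
    also have "\<dots> = real (2 * r + 1) * C * ((1 / 4) ^ r * (3 / 4))"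
      by (simp add: power_one_over)
    also have "\<dots> \<le> real (2 * r + 1) * C * (z * (1 - z)) ^ r"
      using zpow by (rule mult_left_mono) (simp add: C_def)
    finally show ?thesis .
  qed
  then have "b * (s * (3 / 4)) \<le> b * (real (2 * r + 1) * C * (z * (1 - z)) ^ r)"
    using assms(2) by (rule mult_left_mono)
  moreover have "binomial_cdf (2 * r + 1) r (1 / 2 - b) = 1 / 2 + b * (real (2 * r + 1) * C * (z * (1 - z)) ^ r)"
    unfolding power_mult_distrib using mvt binomial_cdf_half[of r] by (simp add: algebra_simps)
  ultimately show ?thesis
    unfolding s_def by linarith
qed

lemma majority_is_iff_mismatches_le:
  "majority_is (2 * r + 1) b f \<longleftrightarrow> card {i \<in> {..<2 * r + 1}. f i \<noteq> b} \<le> r"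
  using card_filter_add_card_filter_not[of "{..<2 * r + 1}" "\<lambda>i. f i = b"]
  unfolding majority_is_def by auto

lemma mismatch_prob_le:
  fixes x eta \<epsilon> \<delta> :: real
  assumes "0 \<le> \<delta>" "1 / 2 + \<delta> \<le> x" "0 \<le> \<epsilon>" "eta \<le> 1 / 2 - \<epsilon>"
  shows "x * eta + (1 - x) * (1 - eta) \<le> 1 / 2 - 2 * \<epsilon> * \<delta>"
proof -
  have "\<delta> * (2 * \<epsilon>) \<le> (x - 1 / 2) * (1 - 2 * eta)"
    using assms by (intro mult_mono) auto
  then show ?thesis
    by (simp add: algebra_simps)
qed

lemma prob_majority_noisy_samples_ge_binomial_cdf:
  assumes "finite A" "A \<noteq> {}" "0 \<le> q" "q \<le> 1"
    and x: "x = real (card {a \<in> A. opn a = B}) / real (card A)"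
    and eta: "\<And>i. i < 2 * r + 1 \<Longrightarrow> 0 \<le> eta i \<and> eta i \<le> 1 \<and> x * eta i + (1 - x) * (1 - eta i) \<le> q"
  shows "binomial_cdf (2 * r + 1) r q
    \<le> measure_pmf.prob (noisy_samples (2 * r + 1) A opn eta) {f. majority_is (2 * r + 1) B f}"
proof -
  define D where "D i = noisy_sample A opn (eta i)" for i
  have "0 \<le> x" "x \<le> 1"
    unfolding x using assms(1) by (auto simp: divide_le_eq_1 card_mono)
  then have "map_pmf (\<lambda>v. v \<noteq> B) (D i) = bernoulli_pmf (x * eta i + (1 - x) * (1 - eta i))
      \<and> 0 \<le> x * eta i + (1 - x) * (1 - eta i) \<and> x * eta i + (1 - x) * (1 - eta i) \<le> q"
    if "i \<in> {..<2 * r + 1}" for i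
    using that eta[of i] noisy_sample_mismatch[OF assms(1,2) _ _ x, of "eta i"]
    unfolding D_def by (auto intro!: add_nonneg_nonneg mult_nonneg_nonneg)
  then have "measure_pmf.prob (binomial_pmf (2 * r + 1) q) {..r}
      \<le> measure_pmf.prob (mismatch_count_pmf {..<2 * r + 1} B D) {..r}"
    using prob_binomial_le_prob_mismatch_count[of "{..<2 * r + 1}" B D "\<lambda>i. x * eta i + (1 - x) * (1 - eta i)" q r]
      assms(3,4) by simp
  also have "\<dots> = measure_pmf.prob (noisy_samples (2 * r + 1) A opn eta) {f. majority_is (2 * r + 1) B f}"
    unfolding majority_is_iff_mismatches_le mismatch_count_pmf_def noisy_samples_def D_def[abs_def]
    by (simp add: vimage_def)
  finally show ?thesis
    using assms(3,4) by (simp add: prob_binomial_pmf_atMost)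
qed

lemma prob_majority_noisy_samples_ge_half_plus:
  fixes \<epsilon> \<delta> :: real
  assumes "r \<ge> 1" "0 \<le> \<epsilon>" "0 \<le> \<delta>" "finite A" "A \<noteq> {}"
    and frac: "1 / 2 + \<delta> \<le> real (card {a \<in> A. opn a = B}) / real (card A)"
    and eta: "\<And>i. i < 2 * r + 1 \<Longrightarrow> 0 \<le> eta i \<and> eta i \<le> 1 / 2 - \<epsilon>"
  shows "1 / 2 + 3 / 4 * min (2 * \<epsilon> * \<delta>) (1 / (4 * sqrt r)) * sqrt r
    \<le> measure_pmf.prob (noisy_samples (2 * r + 1) A opn eta) {f. majority_is (2 * r + 1) B f}"
proof -
  define \<beta> where "\<beta> = min (2 * \<epsilon> * \<delta>) (1 / (4 * sqrt (real r)))"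
  have "1 \<le> sqrt (real r)"
    using assms(1) by simp
  then have "1 / (4 * sqrt (real r)) \<le> 1 / 4"
    by (intro divide_left_mono) auto
  then have \<beta>: "0 \<le> \<beta>" "\<beta> \<le> 1 / (4 * sqrt (real r))" "\<beta> \<le> 1 / 2"
    using assms(2,3) by (auto simp: \<beta>_def)
  have "1 / 2 + 3 / 4 * \<beta> * sqrt (real r) \<le> binomial_cdf (2 * r + 1) r (1 / 2 - \<beta>)"
    using assms(1) \<beta> by (intro binomial_cdf_below_half_ge)
  also have "\<dots> \<le> measure_pmf.prob (noisy_samples (2 * r + 1) A opn eta) {f. majority_is (2 * r + 1) B f}"
  proof (rule prob_majority_noisy_samples_ge_binomial_cdf[OF assms(4,5) _ _ refl])
    fix i assume "i < 2 * r + 1"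
    then have eta_i: "0 \<le> eta i" "eta i \<le> 1 / 2 - \<epsilon>"
      using eta by auto
    let ?x = "real (card {a \<in> A. opn a = B}) / real (card A)"
    have "?x * eta i + (1 - ?x) * (1 - eta i) \<le> 1 / 2 - 2 * \<epsilon> * \<delta>"
      using assms(2,3) frac eta_i by (intro mismatch_prob_le) auto
    with eta_i show "0 \<le> eta i \<and> eta i \<le> 1 \<and> ?x * eta i + (1 - ?x) * (1 - eta i) \<le> 1 / 2 - \<beta>"
      using assms(2) unfolding \<beta>_def by auto
  qed (use \<beta> in auto)
  finally show ?thesis
    unfolding \<beta>_def .
qed

theorem mainTheorem4:
  fixes \<epsilon> \<delta> :: real and r \<gamma> :: nat and A :: "'a set" and opn :: "'a \<Rightarrow> bool"
    and B :: bool and eta :: "nat \<Rightarrow> real"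
  assumes "0 < \<epsilon>" and "\<epsilon> \<le> 1/2"
    and "r = nat \<lceil>2^22 / \<epsilon>^2\<rceil>" and "\<gamma> = 2 * r + 1"
    and "\<delta> \<ge> 0"
    and "finite A" and "A \<noteq> {}"
    and "real (card {a \<in> A. opn a = B}) / real (card A) \<ge> 1/2 + \<delta>"
    and "\<And>i. i < \<gamma> \<Longrightarrow> 0 \<le> eta i \<and> eta i \<le> 1/2 - \<epsilon>"
  shows "measure_pmf.prob (noisy_samples \<gamma> A opn eta) {f. majority_is \<gamma> B f}
           \<ge> min (1/2 + 4 * \<delta>) (1/2 + 1/100)"
proof -
  have r_ge: "2 ^ 22 / \<epsilon> ^ 2 \<le> real r"
    using assms(3) by linarith
  then have r: "r \<ge> 1"
    using assms(1) by (cases r) auto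
  from r_ge have "sqrt (2 ^ 22 / \<epsilon> ^ 2) \<le> sqrt (real r)"
    by (rule real_sqrt_le_mono)
  then have sqrt_r: "2 ^ 11 / \<epsilon> \<le> sqrt (real r)"
    using assms(1) by (simp add: real_sqrt_divide real_sqrt_power power_even_eq)
  have "4 * \<delta> \<le> 3 / 2 * \<epsilon> * \<delta> * (2 ^ 11 / \<epsilon>)"
    using assms(1,5) by simp
  also have "\<dots> \<le> 3 / 2 * \<epsilon> * \<delta> * sqrt (real r)"
    using sqrt_r assms(1,5) by (intro mult_left_mono) auto
  finally have "min (4 * \<delta>) (1 / 100) \<le> 3 / 4 * min (2 * \<epsilon> * \<delta>) (1 / (4 * sqrt r)) * sqrt r"
    using r by (auto simp: min_def field_simps)
  moreover have "1 / 2 + 3 / 4 * min (2 * \<epsilon> * \<delta>) (1 / (4 * sqrt r)) * sqrt r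
      \<le> measure_pmf.prob (noisy_samples \<gamma> A opn eta) {f. majority_is \<gamma> B f}"
    unfolding assms(4) using r assms(1,5-8) assms(9)[unfolded assms(4)]
    by (intro prob_majority_noisy_samples_ge_half_plus) auto
  ultimately show ?thesis
    by linarith
qed

end
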